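(* Let $\{X_t\}_{t\ge0}$ follow $X_{t+1}=\sigma(A_\star X_t)+HV_t$, $X_0=HV_0$, with $A_\star,H\in\mathbb R^{d_x\times d_x}$, $V_t$ i.i.d. $N(0,I_{d_x})$, and $\sigma$ applying a scalar function coordinatewise. Assume: (1) $H$ is full rank; (2) the scalar $\sigma$ is $1$-Lipschitz, $\sigma(0)=0$, and there is $\zeta\in(0,1]$ with $|\sigma(x)-\sigma(y)|\ge\zeta|x-y|$ for all $x,y$; (3) there exist a positive definite diagonal $P_\star\succcurlyeq I$ and $\rho\in(0,1)$ with $A_\star^\top P_\star A_\star\preccurlyeq\rho P_\star$. Then $$\sup_{t\in\mathbb N}\mathbb{E}\|X_t\|_2^4\le B_X^4,\qquad B_X=\frac{12\sqrt2\,\|H\|_{op}\|P_\star\|_{op}^{1/2}\sqrt{d_x}}{1-\rho}.$$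
   Context: $\|\cdot\|_{op}$ is the largest singular value; $\preccurlyeq$ is the Loewner order. *)

theory Defs
  imports "HOL-Analysis.Analysis" "HOL-Probability.Probability"
begin

definition coordwise :: "(real \<Rightarrow> real) \<Rightarrow> real^'n \<Rightarrow> real^'n" where
  "coordwise s x = (\<chi> i. s (x $ i))"

definition loewner_le :: "real^'n^'n \<Rightarrow> real^'n^'n \<Rightarrow> bool" where
  "loewner_le A B \<longleftrightarrow> (\<forall>x. x \<bullet> (A *v x) \<le> x \<bullet> (B *v x))"

definition op_norm :: "real^'n^'m \<Rightarrow> real" where
  "op_norm A = onorm (\<lambda>x. A *v x)"

text \<open>The process X_{t+1} = sigma(A X_t) + H V_t (with V_{t+1}), X_0 = H V_0.\<close>
fun proc :: "(real \<Rightarrow> real) \<Rightarrow> real^'n^'n \<Rightarrow> real^'n^'n \<Rightarrow> (nat \<Rightarrow> 'a \<Rightarrow> real^'n)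
     \<Rightarrow> nat \<Rightarrow> 'a \<Rightarrow> real^'n" where
  "proc s A H V 0 \<omega> = H *v V 0 \<omega>"
| "proc s A H V (Suc t) \<omega> = coordwise s (A *v proc s A H V t \<omega>) + H *v V (Suc t) \<omega>"

end

theory Submission
  imports Defs
begin

text \<open>For a diagonal \<open>P \<ge> I\<close> the weighted norm \<open>\<parallel>x\<parallel>\<^sub>P = sqrt (x \<bullet> (P *v x))\<close> dominates the
  Euclidean norm, is not increased by the coordinatewise \<open>\<sigma>\<close> (because \<open>\<bar>\<sigma> x\<bar> \<le> \<bar>x\<bar>\<close>), and is
  contracted by \<open>A\<close> with factor \<open>sqrt \<rho>\<close>. Hence \<open>a\<^sub>t = \<parallel>X\<^sub>t\<parallel>\<^sub>P\<close> satisfies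
  \<open>a\<^sub>t\<^sub>+\<^sub>1 \<le> sqrt \<rho> a\<^sub>t + \<parallel>H V\<^sub>t\<^sub>+\<^sub>1\<parallel>\<^sub>P\<close> pathwise, and convexity of \<open>x\<^sup>4\<close> turns this into the linear
  recursion \<open>E a\<^sub>t\<^sub>+\<^sub>1\<^sup>4 \<le> sqrt \<rho> E a\<^sub>t\<^sup>4 + E \<parallel>H V\<parallel>\<^sub>P\<^sup>4 / (1 - sqrt \<rho>)\<^sup>3\<close>, whose fixed point bounds every
  fourth moment. Only the Gaussian marginals of the noise enter, through \<open>E V\<^sub>i\<^sup>4 = 3\<close>.\<close>

lemma convex_on_nonneg_power: "convex_on {0::real..} (\<lambda>x. x ^ n)"
proof (cases "even n")
  case True
  then show ?thesis
    by (rule convex_on_subset[OF convex_power_even]) auto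
next
  case False
  then show ?thesis by (rule convex_power_odd)
qed

text \<open>Jensen's inequality for \<open>x ^ p\<close> at \<open>u\<close> and \<open>b / (1 - r)\<close> with weights \<open>r\<close> and \<open>1 - r\<close>.\<close>
lemma power_affine_le:
  fixes r u b :: real
  assumes "0 \<le> r" "r < 1" "0 \<le> u" "0 \<le> b"
  shows "(r * u + b) ^ p \<le> r * u ^ p + b ^ p / (1 - r) ^ (p - 1)"
proof (cases p)
  case (Suc q)
  have "(r * u + (1 - r) * (b / (1 - r))) ^ p \<le> r * u ^ p + (1 - r) * (b / (1 - r)) ^ p"
    using convex_onD[OF convex_on_nonneg_power, of "1 - r" u "b / (1 - r)" p] assms by simp
  moreover have "(1 - r) * (b / (1 - r)) ^ p = b ^ p / (1 - r) ^ (p - 1)"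
    using Suc assms by (simp add: power_divide)
  ultimately show ?thesis using assms by simp
qed (use assms in simp)

lemma one_minus_le_two_mult_one_minus_sqrt:
  fixes x :: real
  assumes "0 \<le> x"
  shows "1 - x \<le> 2 * (1 - sqrt x)"
proof -
  have "0 \<le> (1 - sqrt x)\<^sup>2" by simp
  then show ?thesis using assms by (simp add: power2_diff)
qed

lemma loewner_le_diag_le:
  fixes A B :: "real^'n^'n"
  assumes "loewner_le A B"
  shows "A $ i $ i \<le> B $ i $ i"
proof -
  have "axis i 1 \<bullet> (C *v axis i 1) = C $ i $ i" for C :: "real^'n^'n"
    by (metis inner_commute cart_eq_inner_axis matrix_vector_mult_basis column_def vec_lambda_beta)
  then show ?thesis using assms unfolding loewner_le_def by metis
qed

lemma norm_le_op_norm: "norm (B *v x) \<le> op_norm B * norm x"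
  unfolding op_norm_def by (rule onorm[OF matrix_vector_mul_bounded_linear])

lemma op_norm_nonneg: "0 \<le> op_norm B"
  unfolding op_norm_def by (rule onorm_pos_le[OF matrix_vector_mul_bounded_linear])

text \<open>The weighted norm \<open>\<parallel>x\<parallel>\<^sub>P\<close> of a nonnegative diagonal \<open>P\<close> (cf. \<open>diag_norm_squared\<close>), written as the
  Euclidean norm of a rescaled vector so that it inherits the triangle inequality.\<close>
definition diag_norm :: "real^'n^'n \<Rightarrow> real^'n \<Rightarrow> real" where
  "diag_norm P x = norm (\<chi> i. sqrt (P $ i $ i) * x $ i)"

lemma diag_norm_nonneg: "0 \<le> diag_norm P x"
  by (simp add: diag_norm_def)

lemma diag_norm_triangle: "diag_norm P (x + y) \<le> diag_norm P x + diag_norm P y"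
proof -
  have "(\<chi> i. sqrt (P $ i $ i) * (x + y) $ i)
      = (\<chi> i. sqrt (P $ i $ i) * x $ i) + (\<chi> i. sqrt (P $ i $ i) * y $ i)"
    by (simp add: vec_eq_iff algebra_simps)
  then show ?thesis by (simp add: diag_norm_def norm_triangle_ineq)
qed

lemma diag_norm_coordwise_le:
  assumes "\<And>t. \<bar>s t\<bar> \<le> \<bar>t\<bar>"
  shows "diag_norm P (coordwise s x) \<le> diag_norm P x"
  unfolding diag_norm_def coordwise_def
  by (rule norm_le_componentwise_cart) (simp add: abs_mult mult_left_mono assms)

lemma norm_le_diag_norm:
  assumes "\<And>i. 1 \<le> P $ i $ i"
  shows "norm x \<le> diag_norm P x"
  unfolding diag_norm_def
proof (rule norm_le_componentwise_cart)
  fix i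
  have "1 \<le> sqrt (P $ i $ i)" using assms[of i] by simp
  with mult_right_mono[OF this, of "\<bar>x $ i\<bar>"]
  show "norm (x $ i) \<le> norm ((\<chi> i. sqrt (P $ i $ i) * x $ i) $ i)"
    by (simp add: abs_mult)
qed

lemma diag_norm_squared:
  fixes P :: "real^'n^'n"
  assumes "\<And>i j. i \<noteq> j \<Longrightarrow> P $ i $ j = 0" and "\<And>i. 0 \<le> P $ i $ i"
  shows "diag_norm P x ^ 2 = x \<bullet> (P *v x)"
proof -
  have "(P *v x) $ i = P $ i $ i * x $ i" for i
    unfolding matrix_vector_mult_def
    by (simp add: assms(1) sum.remove[of UNIV i] sum.neutral)
  then show ?thesis
    by (simp add: diag_norm_def power2_norm_eq_inner inner_vec_def assms(2) algebra_simps)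
qed

lemma diag_norm_le_op_norm:
  fixes P :: "real^'n^'n"
  assumes "\<And>i j. i \<noteq> j \<Longrightarrow> P $ i $ j = 0" and "\<And>i. 0 \<le> P $ i $ i"
  shows "diag_norm P x \<le> sqrt (op_norm P) * norm x"
proof (rule power2_le_imp_le)
  have "diag_norm P x ^ 2 = x \<bullet> (P *v x)"
    using assms by (rule diag_norm_squared)
  also have "\<dots> \<le> norm x * norm (P *v x)"
    by (rule norm_cauchy_schwarz)
  also have "\<dots> \<le> norm x * (op_norm P * norm x)"
    by (intro mult_left_mono norm_le_op_norm) auto
  finally show "diag_norm P x ^ 2 \<le> (sqrt (op_norm P) * norm x) ^ 2"
    by (simp add: op_norm_nonneg power_mult_distrib power2_eq_square mult_ac)
qed (simp add: op_norm_nonneg)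

lemma diag_norm_contraction:
  fixes A P :: "real^'n^'n"
  assumes "\<And>i j. i \<noteq> j \<Longrightarrow> P $ i $ j = 0" and "\<And>i. 0 \<le> P $ i $ i" and "0 \<le> \<rho>"
    and "loewner_le (transpose A ** P ** A) (\<rho> *\<^sub>R P)"
  shows "diag_norm P (A *v x) \<le> sqrt \<rho> * diag_norm P x"
proof (rule power2_le_imp_le)
  have squared: "diag_norm P y ^ 2 = y \<bullet> (P *v y)" for y
    using assms(1,2) by (rule diag_norm_squared)
  have "x \<bullet> ((transpose A ** P ** A) *v x) = x \<bullet> (transpose A *v (P *v (A *v x)))"
    by (simp add: matrix_vector_mul_assoc matrix_mul_assoc)
  also have "\<dots> = (x v* transpose A) \<bullet> (P *v (A *v x))"
    by (rule dot_lmul_matrix[symmetric])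
  also have "\<dots> = diag_norm P (A *v x) ^ 2"
    by (simp only: vector_transpose_matrix squared)
  finally have "diag_norm P (A *v x) ^ 2 = x \<bullet> ((transpose A ** P ** A) *v x)" ..
  also have "\<dots> \<le> x \<bullet> ((\<rho> *\<^sub>R P) *v x)"
    using assms(4) unfolding loewner_le_def by blast
  also have "\<dots> = (sqrt \<rho> * diag_norm P x) ^ 2"
    by (simp add: squared power_mult_distrib assms(3)
        flip: scaleR_matrix_vector_assoc)
  finally show "diag_norm P (A *v x) ^ 2 \<le> (sqrt \<rho> * diag_norm P x) ^ 2" .
qed (simp add: assms(3) diag_norm_nonneg)

lemma borel_measurable_vec_components:
  fixes f :: "'a \<Rightarrow> real^'n"
  assumes "\<And>i. (\<lambda>\<omega>. f \<omega> $ i) \<in> borel_measurable M"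
  shows "f \<in> borel_measurable M"
  by (subst borel_measurable_euclidean_space) (auto simp: Basis_vec_def inner_axis assms)

lemma borel_measurable_matrix_vector_mult:
  fixes B :: "real^'n^'m"
  assumes "f \<in> borel_measurable M"
  shows "(\<lambda>\<omega>. B *v f \<omega>) \<in> borel_measurable M"
  using linear_continuous_on[OF matrix_vector_mul_bounded_linear] assms
  by (rule borel_measurable_continuous_on)

lemma borel_measurable_diag_norm:
  assumes "f \<in> borel_measurable M"
  shows "(\<lambda>\<omega>. diag_norm P (f \<omega>)) \<in> borel_measurable M"
proof -
  have "continuous_on UNIV (diag_norm P)"
    unfolding diag_norm_def by (intro continuous_intros)
  then show ?thesis using assms by (rule borel_measurable_continuous_on)
qed

lemma norm_power4_le_card_sum:
  fixes v :: "real^'n"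
  shows "norm v ^ 4 \<le> CARD('n) * (\<Sum>i\<in>UNIV. (v $ i) ^ 4)"
proof -
  have "norm v ^ 4 = (norm v ^ 2)\<^sup>2"
    by (simp flip: power_mult)
  also have "\<dots> = (\<Sum>i\<in>UNIV. (v $ i)\<^sup>2)\<^sup>2"
    by (simp add: norm_vec_def L2_set_def sum_nonneg)
  also have "\<dots> \<le> (\<Sum>i\<in>UNIV. ((v $ i)\<^sup>2)\<^sup>2) * CARD('n)"
    by (rule sum_squared_le_sum_of_squares)
  finally show ?thesis by (simp add: mult.commute flip: power_mult)
qed

lemma nn_integral_std_normal_power4:
  assumes "distributed M lborel Y std_normal_density"
  shows "(\<integral>\<^sup>+\<omega>. ennreal (Y \<omega> ^ 4) \<partial>M) = 3"
proof -
  have moment: "has_bochner_integral lborel (\<lambda>x. std_normal_density x * x ^ 4) 3"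
    using std_normal_moment_even[of 2] by (simp add: fact_numeral)
  have "(\<integral>\<^sup>+\<omega>. ennreal (Y \<omega> ^ 4) \<partial>M) = (\<integral>\<^sup>+x. ennreal (std_normal_density x * x ^ 4) \<partial>lborel)"
    using distributed_nn_integral[OF assms, of "\<lambda>x. ennreal (x ^ 4)"]
    by (simp add: ennreal_mult normal_density_nonneg)
  also have "\<dots> = 3"
    using moment by (simp add: has_bochner_integral_iff nn_integral_eq_integral normal_density_nonneg)
  finally show ?thesis .
qed

lemma nn_integral_norm_power4_std_normal_le:
  fixes X :: "'a \<Rightarrow> real^'n"
  assumes "\<And>i. distributed M lborel (\<lambda>\<omega>. X \<omega> $ i) std_normal_density"
  shows "(\<integral>\<^sup>+\<omega>. ennreal (norm (X \<omega>) ^ 4) \<partial>M) \<le> ennreal (3 * real CARD('n) ^ 2)"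
proof -
  have coord_meas: "(\<lambda>\<omega>. X \<omega> $ i) \<in> borel_measurable M" for i
    using distributed_measurable[OF assms[of i]] by (simp add: measurable_lborel1)
  have "(\<integral>\<^sup>+\<omega>. ennreal (norm (X \<omega>) ^ 4) \<partial>M)
      \<le> (\<integral>\<^sup>+\<omega>. (\<Sum>i\<in>UNIV. ennreal CARD('n) * ennreal (X \<omega> $ i ^ 4)) \<partial>M)"
    using norm_power4_le_card_sum
    by (intro nn_integral_mono)
      (simp add: ennreal_leI sum_ennreal sum_distrib_left sum_nonneg flip: ennreal_mult)
  also have "\<dots> = (\<Sum>i\<in>UNIV. ennreal CARD('n) * (\<integral>\<^sup>+\<omega>. ennreal (X \<omega> $ i ^ 4) \<partial>M))"
    using coord_meas by (simp add: nn_integral_sum nn_integral_cmult)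
  also have "\<dots> = ennreal (3 * real CARD('n) ^ 2)"
    using nn_integral_std_normal_power4[OF assms]
    by (simp add: power2_eq_square ennreal_of_nat_eq_real_of_nat ennreal_mult mult_ac)
  finally show ?thesis .
qed

lemma nn_integral_diag_norm_mult_std_normal_power4_le:
  fixes X :: "'a \<Rightarrow> real^'n" and H P :: "real^'n^'n"
  assumes "\<And>i. distributed M lborel (\<lambda>\<omega>. X \<omega> $ i) std_normal_density"
    and "\<And>i j. i \<noteq> j \<Longrightarrow> P $ i $ j = 0" and "\<And>i. 0 \<le> P $ i $ i"
  shows "(\<integral>\<^sup>+\<omega>. ennreal (diag_norm P (H *v X \<omega>) ^ 4) \<partial>M)
    \<le> ennreal (3 * (sqrt (op_norm P) * op_norm H) ^ 4 * real CARD('n) ^ 2)"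
proof -
  define c where "c = sqrt (op_norm P) * op_norm H"
  have "diag_norm P (H *v X \<omega>) \<le> c * norm (X \<omega>)" for \<omega>
  proof -
    have "diag_norm P (H *v X \<omega>) \<le> sqrt (op_norm P) * norm (H *v X \<omega>)"
      using assms(2,3) by (rule diag_norm_le_op_norm)
    also have "\<dots> \<le> sqrt (op_norm P) * (op_norm H * norm (X \<omega>))"
      by (intro mult_left_mono norm_le_op_norm) (simp add: op_norm_nonneg)
    finally show ?thesis by (simp add: c_def mult.assoc)
  qed
  then have "(\<integral>\<^sup>+\<omega>. ennreal (diag_norm P (H *v X \<omega>) ^ 4) \<partial>M)
      \<le> (\<integral>\<^sup>+\<omega>. ennreal (c ^ 4) * ennreal (norm (X \<omega>) ^ 4) \<partial>M)"
    by (intro nn_integral_mono)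
      (simp add: diag_norm_nonneg power_mono ennreal_leI flip: ennreal_mult power_mult_distrib)
  also have "\<dots> = ennreal (c ^ 4) * (\<integral>\<^sup>+\<omega>. ennreal (norm (X \<omega>) ^ 4) \<partial>M)"
  proof (rule nn_integral_cmult)
    have "X \<in> borel_measurable M"
      using distributed_measurable[OF assms(1)]
      by (simp add: borel_measurable_vec_components measurable_lborel1)
    then show "(\<lambda>\<omega>. ennreal (norm (X \<omega>) ^ 4)) \<in> borel_measurable M"
      by measurable
  qed
  also have "\<dots> \<le> ennreal (c ^ 4) * ennreal (3 * real CARD('n) ^ 2)"
    using nn_integral_norm_power4_std_normal_le[OF assms(1)] by (rule mult_left_mono) simp
  finally show ?thesis
    by (simp add: c_def ennreal_mult mult_ac)
qed

lemma nn_integral_power_contracting_recursion_le: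
  fixes a b :: "nat \<Rightarrow> 'a \<Rightarrow> real" and r K :: real
  assumes "0 \<le> r" "r < 1" "0 \<le> K"
    and meas: "\<And>t. a t \<in> borel_measurable M" "\<And>t. b t \<in> borel_measurable M"
    and nonneg: "\<And>t \<omega>. 0 \<le> a t \<omega>" "\<And>t \<omega>. 0 \<le> b t \<omega>"
    and start: "\<And>\<omega>. a 0 \<omega> \<le> b 0 \<omega>"
    and step: "\<And>t \<omega>. a (Suc t) \<omega> \<le> r * a t \<omega> + b (Suc t) \<omega>"
    and b_moment: "\<And>t. (\<integral>\<^sup>+\<omega>. ennreal (b t \<omega> ^ p) \<partial>M) \<le> ennreal K"
  shows "(\<integral>\<^sup>+\<omega>. ennreal (a t \<omega> ^ p) \<partial>M) \<le> ennreal (K / (1 - r) ^ p)"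
proof (cases "p = 0")
  case True
  then show ?thesis using b_moment[of t] by simp
next
  case False
  define e where "e = 1 / (1 - r) ^ (p - 1)"
  define B where "B = K / (1 - r) ^ p"
  have e_nonneg: "0 \<le> e" and B_nonneg: "0 \<le> B"
    using assms by (simp_all add: e_def B_def)
  have fixpoint: "r * B + e * K = B"
  proof -
    have "r * (K / ((1 - r) * y)) + K / y = K / ((1 - r) * y)" if "0 < y" for y
      using that assms(2) by (simp add: field_simps)
    moreover have "(1 - r) ^ p = (1 - r) * (1 - r) ^ (p - 1)"
      using False by (simp flip: power_Suc)
    ultimately show ?thesis using assms(2) by (simp add: e_def B_def)
  qed
  have "(\<integral>\<^sup>+\<omega>. ennreal (a t \<omega> ^ p) \<partial>M) \<le> ennreal B" for t
  proof (induction t)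
    case 0
    have "(\<integral>\<^sup>+\<omega>. ennreal (a 0 \<omega> ^ p) \<partial>M) \<le> (\<integral>\<^sup>+\<omega>. ennreal (b 0 \<omega> ^ p) \<partial>M)"
      by (intro nn_integral_mono ennreal_leI power_mono start nonneg)
    also have "\<dots> \<le> ennreal K"
      by (rule b_moment)
    also have "\<dots> \<le> ennreal B"
      using assms by (intro ennreal_leI) (simp add: B_def le_divide_eq mult_left_le power_le_one)
    finally show ?case .
  next
    case (Suc t)
    have "(\<integral>\<^sup>+\<omega>. ennreal (a (Suc t) \<omega> ^ p) \<partial>M)
        \<le> (\<integral>\<^sup>+\<omega>. ennreal r * ennreal (a t \<omega> ^ p) + ennreal e * ennreal (b (Suc t) \<omega> ^ p) \<partial>M)"
    proof (rule nn_integral_mono)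
      fix \<omega>
      have "a (Suc t) \<omega> ^ p \<le> (r * a t \<omega> + b (Suc t) \<omega>) ^ p"
        using step nonneg by (intro power_mono)
      also have "\<dots> \<le> r * a t \<omega> ^ p + e * b (Suc t) \<omega> ^ p"
        using power_affine_le[of r "a t \<omega>" "b (Suc t) \<omega>" p] assms nonneg by (simp add: e_def)
      finally show "ennreal (a (Suc t) \<omega> ^ p)
          \<le> ennreal r * ennreal (a t \<omega> ^ p) + ennreal e * ennreal (b (Suc t) \<omega> ^ p)"
        using assms e_nonneg nonneg by (simp add: ennreal_leI flip: ennreal_mult ennreal_plus)
    qed
    also have "\<dots> = ennreal r * (\<integral>\<^sup>+\<omega>. ennreal (a t \<omega> ^ p) \<partial>M)
        + ennreal e * (\<integral>\<^sup>+\<omega>. ennreal (b (Suc t) \<omega> ^ p) \<partial>M)"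
      using meas by (simp add: nn_integral_add nn_integral_cmult)
    also have "\<dots> \<le> ennreal r * ennreal B + ennreal e * ennreal K"
      by (intro add_mono mult_left_mono Suc.IH b_moment) auto
    also have "\<dots> = ennreal (r * B + e * K)"
      using assms e_nonneg B_nonneg by (simp add: ennreal_plus ennreal_mult)
    finally show ?case
      by (simp only: fixpoint)
  qed
  then show ?thesis by (simp add: B_def)
qed

lemma borel_measurable_proc:
  assumes "continuous_on UNIV s" and "\<And>t. V t \<in> borel_measurable M"
  shows "proc s A H V t \<in> borel_measurable M"
proof -
  have noise: "(\<lambda>\<omega>. H *v V t \<omega>) \<in> borel_measurable M" for t
    using assms(2) by (rule borel_measurable_matrix_vector_mult)
  have drift: "continuous_on UNIV (\<lambda>x. coordwise s (A *v x))"
    unfolding coordwise_def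
    by (intro continuous_intros continuous_on_compose2[OF assms(1)]) auto
  show ?thesis
  proof (induction t)
    case (Suc t)
    have "(\<lambda>\<omega>. coordwise s (A *v proc s A H V t \<omega>)) \<in> borel_measurable M"
      using drift Suc.IH by (rule borel_measurable_continuous_on)
    with noise show ?case
      by (simp add: proc.simps[abs_def] borel_measurable_add)
  qed (simp add: noise proc.simps[abs_def])
qed

lemma diag_norm_proc_Suc_le:
  fixes A P :: "real^'n^'n"
  assumes "\<And>t. \<bar>s t\<bar> \<le> \<bar>t\<bar>"
    and "\<And>i j. i \<noteq> j \<Longrightarrow> P $ i $ j = 0" and "\<And>i. 0 \<le> P $ i $ i" and "0 \<le> \<rho>"
    and "loewner_le (transpose A ** P ** A) (\<rho> *\<^sub>R P)"
  shows "diag_norm P (proc s A H V (Suc t) \<omega>)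
    \<le> sqrt \<rho> * diag_norm P (proc s A H V t \<omega>) + diag_norm P (H *v V (Suc t) \<omega>)"
proof -
  let ?x = "proc s A H V t \<omega>"
  have "diag_norm P (proc s A H V (Suc t) \<omega>)
      \<le> diag_norm P (coordwise s (A *v ?x)) + diag_norm P (H *v V (Suc t) \<omega>)"
    by (simp add: diag_norm_triangle)
  also have "\<dots> \<le> diag_norm P (A *v ?x) + diag_norm P (H *v V (Suc t) \<omega>)"
    using assms(1) by (simp add: diag_norm_coordwise_le)
  also have "\<dots> \<le> sqrt \<rho> * diag_norm P ?x + diag_norm P (H *v V (Suc t) \<omega>)"
    using diag_norm_contraction[OF assms(2-5)] by simp
  finally show ?thesis .
qed

lemma nn_integral_norm_proc_power4_le:
  fixes V :: "nat \<Rightarrow> 'a \<Rightarrow> real^'n" and A H P :: "real^'n^'n"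
  assumes V_gauss: "\<And>t i. distributed M lborel (\<lambda>\<omega>. V t \<omega> $ i) std_normal_density"
    and s_lip: "\<And>x y. \<bar>s x - s y\<bar> \<le> \<bar>x - y\<bar>" and "s 0 = 0"
    and P_diag: "\<And>i j. i \<noteq> j \<Longrightarrow> P $ i $ j = 0" and P_ge_1: "\<And>i. 1 \<le> P $ i $ i"
    and "0 \<le> \<rho>" "\<rho> < 1" and stab: "loewner_le (transpose A ** P ** A) (\<rho> *\<^sub>R P)"
  shows "(\<integral>\<^sup>+\<omega>. ennreal (norm (proc s A H V t \<omega>) ^ 4) \<partial>M)
    \<le> ennreal (3 * (sqrt (op_norm P) * op_norm H) ^ 4 * real CARD('n) ^ 2 / (1 - sqrt \<rho>) ^ 4)"
proof -
  have P_nonneg: "0 \<le> P $ i $ i" for i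
    using P_ge_1[of i] by linarith
  have s_cont: "continuous_on UNIV s"
    by (rule lipschitz_on_continuous_on[of 1]) (auto intro!: lipschitz_onI simp: dist_real_def s_lip)
  have V_meas: "V t \<in> borel_measurable M" for t
    using distributed_measurable[OF V_gauss] by (simp add: borel_measurable_vec_components measurable_lborel1)
  have "norm (proc s A H V t \<omega>) \<le> diag_norm P (proc s A H V t \<omega>)" for \<omega>
    using P_ge_1 by (rule norm_le_diag_norm)
  then have "(\<integral>\<^sup>+\<omega>. ennreal (norm (proc s A H V t \<omega>) ^ 4) \<partial>M)
      \<le> (\<integral>\<^sup>+\<omega>. ennreal (diag_norm P (proc s A H V t \<omega>) ^ 4) \<partial>M)"
    by (intro nn_integral_mono ennreal_leI power_mono norm_ge_zero)
  also have "\<dots> \<le> ennreal (3 * (sqrt (op_norm P) * op_norm H) ^ 4 * real CARD('n) ^ 2 / (1 - sqrt \<rho>) ^ 4)"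
  proof (rule nn_integral_power_contracting_recursion_le[where b = "\<lambda>t \<omega>. diag_norm P (H *v V t \<omega>)"])
    show "diag_norm P (proc s A H V (Suc t) \<omega>)
      \<le> sqrt \<rho> * diag_norm P (proc s A H V t \<omega>) + diag_norm P (H *v V (Suc t) \<omega>)" for t \<omega>
      using s_lip[of _ 0] \<open>s 0 = 0\<close> P_diag P_nonneg \<open>0 \<le> \<rho>\<close> stab by (intro diag_norm_proc_Suc_le) auto
    show "(\<integral>\<^sup>+\<omega>. ennreal (diag_norm P (H *v V t \<omega>) ^ 4) \<partial>M)
      \<le> ennreal (3 * (sqrt (op_norm P) * op_norm H) ^ 4 * real CARD('n) ^ 2)" for t
      using V_gauss P_diag P_nonneg by (rule nn_integral_diag_norm_mult_std_normal_power4_le)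
  qed (use \<open>0 \<le> \<rho>\<close> \<open>\<rho> < 1\<close> in \<open>simp_all add: diag_norm_nonneg borel_measurable_diag_norm
      borel_measurable_matrix_vector_mult borel_measurable_proc[OF s_cont V_meas] V_meas\<close>)
  finally show ?thesis .
qed

lemma fourth_moment_constant_le:
  fixes c d \<rho> :: real
  assumes "0 \<le> c" "0 \<le> d" "0 \<le> \<rho>" "\<rho> < 1"
  shows "3 * c ^ 4 * d ^ 2 / (1 - sqrt \<rho>) ^ 4 \<le> (12 * sqrt 2 * c * sqrt d / (1 - \<rho>)) ^ 4"
proof -
  have "(1 - \<rho>) ^ 4 \<le> (2 * (1 - sqrt \<rho>)) ^ 4"
    using assms by (intro power_mono one_minus_le_two_mult_one_minus_sqrt) simp_all
  also have "\<dots> = 16 * (1 - sqrt \<rho>) ^ 4"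
    by (simp only: power_mult_distrib) simp
  moreover have "0 \<le> (1 - sqrt \<rho>) ^ 4"
    using assms by simp
  ultimately have "3 * (1 - \<rho>) ^ 4 \<le> 82944 * (1 - sqrt \<rho>) ^ 4"
    by linarith
  then have "3 / (1 - sqrt \<rho>) ^ 4 \<le> 82944 / (1 - \<rho>) ^ 4"
    using assms by (simp add: divide_simps)
  then have "c ^ 4 * d ^ 2 * (3 / (1 - sqrt \<rho>) ^ 4) \<le> c ^ 4 * d ^ 2 * (82944 / (1 - \<rho>) ^ 4)"
    by (rule mult_left_mono) simp
  moreover have "sqrt x ^ 4 = x\<^sup>2" if "0 \<le> x" for x :: real
    using that by (simp add: eval_nat_numeral)
  ultimately show ?thesis
    using assms by (simp add: power_mult_distrib power_divide mult_ac)
qed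

theorem proposition19:
  fixes M :: "'a measure"
    and V :: "nat \<Rightarrow> 'a \<Rightarrow> real^'n"
    and A H P :: "real^'n^'n"
    and s :: "real \<Rightarrow> real"
    and \<zeta> \<rho> :: real
  assumes "prob_space M"
    and V_indep: "prob_space.indep_vars M (\<lambda>_. borel) (\<lambda>(t, i) \<omega>. V t \<omega> $ i) UNIV"
    and V_gauss: "\<And>t i. distributed M lborel (\<lambda>\<omega>. V t \<omega> $ i) std_normal_density"
    and H_rank: "rank H = CARD('n)"
    and s_lip: "\<And>x y. \<bar>s x - s y\<bar> \<le> \<bar>x - y\<bar>"
    and s_zero: "s 0 = 0"
    and \<zeta>_pos: "0 < \<zeta>" and \<zeta>_le: "\<zeta> \<le> 1"
    and s_lower: "\<And>x y. \<bar>s x - s y\<bar> \<ge> \<zeta> * \<bar>x - y\<bar>"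
    and P_diag: "\<And>i j. i \<noteq> j \<Longrightarrow> P $ i $ j = 0"
    and P_pd: "\<And>x. x \<noteq> 0 \<Longrightarrow> x \<bullet> (P *v x) > 0"
    and P_ge_I: "loewner_le (mat 1) P"
    and \<rho>_pos: "0 < \<rho>" and \<rho>_lt: "\<rho> < 1"
    and stab: "loewner_le (transpose A ** P ** A) (\<rho> *\<^sub>R P)"
  shows "(SUP t. \<integral>\<^sup>+ \<omega>. ennreal (norm (proc s A H V t \<omega>) ^ 4) \<partial>M)
           \<le> ennreal ((12 * sqrt 2 * op_norm H * sqrt (op_norm P) * sqrt (real CARD('n)) / (1 - \<rho>)) ^ 4)"
proof (rule SUP_least)
  fix t
  have "1 \<le> P $ i $ i" for i
    using loewner_le_diag_le[OF P_ge_I, of i] by (simp add: mat_def)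
  then have "(\<integral>\<^sup>+\<omega>. ennreal (norm (proc s A H V t \<omega>) ^ 4) \<partial>M)
      \<le> ennreal (3 * (sqrt (op_norm P) * op_norm H) ^ 4 * real CARD('n) ^ 2 / (1 - sqrt \<rho>) ^ 4)"
    using V_gauss s_lip s_zero P_diag \<rho>_pos \<rho>_lt stab
    by (intro nn_integral_norm_proc_power4_le) auto
  also have "\<dots> \<le> ennreal ((12 * sqrt 2 * op_norm H * sqrt (op_norm P) * sqrt (real CARD('n)) / (1 - \<rho>)) ^ 4)"
    using fourth_moment_constant_le[of "sqrt (op_norm P) * op_norm H" "real CARD('n)" \<rho>] \<rho>_pos \<rho>_lt
    by (intro ennreal_leI) (simp add: op_norm_nonneg mult_ac)
  finally show "(\<integral>\<^sup>+\<omega>. ennreal (norm (proc s A H V t \<omega>) ^ 4) \<partial>M)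
      \<le> ennreal ((12 * sqrt 2 * op_norm H * sqrt (op_norm P) * sqrt (real CARD('n)) / (1 - \<rho>)) ^ 4)" .
qed

end
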